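(* Let $f: D\to\{0,1\}$, $D\subseteq\{0,1\}^n$, be a non-constant $n$-bit partial Boolean function. Then $f$ can be computed exactly by a quantum 1-query algorithm if and only if there exists a vector $\vec\beta=(\beta_0,\beta_1,\dots,\beta_n)^T$ with all $\beta_i\ge 0$, $\beta_0+\beta_1+\cdots+\beta_n=1$, and $$\beta_0+\sum_{i=1}^n \beta_i(-1)^{x_i\oplus y_i}=0$$ for all $x\in\{x\in D: f(x)=0\}$ and all $y\in\{y\in D: f(y)=1\}$ (i.e. $(|F(x\oplus y)\rangle_1)^T\vec\beta=0$).
   Context: An $n$-bit partial Boolean function is a map $f:D\to\{0,1\}$ with $D\subseteq\{0,1\}^n$. For $z\in\{0,1\}^n$, $|F(z)\rangle_1=(1,(-1)^{z_1},\dots,(-1)^{z_n})^T\in\mathbb{R}^{n+1}$. A quantum 1-query algorithm works in a finite-dimensional Hilbert space with orthonormal basis $\{|i,j'\rangle\}$, where $i\in\{0,1,\dots,n\}$ and $j'$ ranges over a finite set; for input $x\in\{0,1\}^n$ the oracle is the unitary $O_x|i,j'\rangle=(-1)^{x_i}|i,j'\rangle$ for $i\in\{1,\dots,n\}$ and $O_x|0,j'\rangle=|0,j'\rangle$. The algorithm consists of an initial state $|\psi_0\rangle$, input-independent unitaries $U_0,U_1$, and a projective measurement with outcomes in $\{0,1\}$ applied to $U_1O_xU_0|\psi_0\rangle$. It computes $f$ exactly if for every $x\in D$ the outcome equals $f(x)$ with probability $1$. *)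

theory Defs
  imports Complex_Main
begin

(* Bit strings in {0,1}^n are boolean lists of length n; True encodes 1.
  Bit x_i (1-based) is  x ! (i - 1).
  The Hilbert space has orthonormal basis |i,j> with i in {0..n}, j in {0..<m}
  (m \<ge> 1 arbitrary: any finite set of work indices). States are
  functions on index pairs, only values on the basis index set matter. *)

type_synonym idx = "nat \<times> nat"
type_synonym qstate = "idx \<Rightarrow> complex"
type_synonym qop = "idx \<Rightarrow> idx \<Rightarrow> complex"

definition basis_idx :: "nat \<Rightarrow> nat \<Rightarrow> idx set" where
  "basis_idx n m = {0..n} \<times> {0..<m}"

definition apply_op :: "nat \<Rightarrow> nat \<Rightarrow> qop \<Rightarrow> qstate \<Rightarrow> qstate" where
  "apply_op n m U v = (\<lambda>a. \<Sum>b\<in>basis_idx n m. U a b * v b)"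

definition is_unitary :: "nat \<Rightarrow> nat \<Rightarrow> qop \<Rightarrow> bool" where
  "is_unitary n m U \<longleftrightarrow>
     (\<forall>a\<in>basis_idx n m. \<forall>b\<in>basis_idx n m.
        (\<Sum>c\<in>basis_idx n m. cnj (U c a) * U c b) = (if a = b then 1 else 0))"

definition is_projection :: "nat \<Rightarrow> nat \<Rightarrow> qop \<Rightarrow> bool" where
  "is_projection n m P \<longleftrightarrow>
     (\<forall>a\<in>basis_idx n m. \<forall>b\<in>basis_idx n m. P a b = cnj (P b a)) \<and>
     (\<forall>a\<in>basis_idx n m. \<forall>b\<in>basis_idx n m.
        (\<Sum>c\<in>basis_idx n m. P a c * P c b) = P a b)"

definition sq_norm :: "nat \<Rightarrow> nat \<Rightarrow> qstate \<Rightarrow> real" where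
  "sq_norm n m v = (\<Sum>a\<in>basis_idx n m. (cmod (v a)) ^ 2)"

definition id_op :: qop where
  "id_op = (\<lambda>a b. if a = b then 1 else 0)"

definition meas_proj :: "qop \<Rightarrow> bool \<Rightarrow> qop" where
  "meas_proj P b = (if b then P else (\<lambda>a c. id_op a c - P a c))"

definition outcome_prob :: "nat \<Rightarrow> nat \<Rightarrow> qop \<Rightarrow> qstate \<Rightarrow> bool \<Rightarrow> real" where
  "outcome_prob n m P v b = sq_norm n m (apply_op n m (meas_proj P b) v)"

definition query_op :: "bool list \<Rightarrow> qstate \<Rightarrow> qstate" where
  "query_op x v = (\<lambda>(i, j). (if 1 \<le> i \<and> x ! (i - 1) then -1 else 1) * v (i, j))"

definition final_state :: "nat \<Rightarrow> nat \<Rightarrow> qstate \<Rightarrow> qop \<Rightarrow> qop \<Rightarrow> bool list \<Rightarrow> qstate" where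
  "final_state n m \<psi>0 U0 U1 x = apply_op n m U1 (query_op x (apply_op n m U0 \<psi>0))"

definition exact_1query :: "nat \<Rightarrow> bool list set \<Rightarrow> (bool list \<Rightarrow> bool) \<Rightarrow> bool" where
  "exact_1query n D f \<longleftrightarrow>
     (\<exists>m::nat. \<exists>\<psi>0 U0 U1 P. m \<ge> 1 \<and> sq_norm n m \<psi>0 = 1 \<and>
        is_unitary n m U0 \<and> is_unitary n m U1 \<and> is_projection n m P \<and>
        (\<forall>x\<in>D. outcome_prob n m P (final_state n m \<psi>0 U0 U1 x) (f x) = 1))"

definition xor_sign :: "bool list \<Rightarrow> bool list \<Rightarrow> nat \<Rightarrow> real" where
  "xor_sign x y i = (if x ! (i - 1) \<noteq> y ! (i - 1) then -1 else 1)"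

end

theory Submission
  imports Defs
begin

(* Let \<phi> = U0 \<psi>0 and \<beta> i be the weight of \<phi> on the query register value i. The oracle
  only flips signs, so the inner product of the states O_x \<phi> and O_y \<phi> is
  \<beta> 0 + \<Sum> \<beta> i (-1)^(x_i \<oplus> y_i); U1 preserves it. An exact algorithm must send
  0-inputs into the kernel and 1-inputs into the range of the measurement projection,
  so these inner products vanish. Conversely, given such \<beta>, query the state with
  amplitudes sqrt (\<beta> i) directly and measure with the orthogonal projection onto the
  span of the 1-input states, obtained by Gram-Schmidt. *)

definition state_inner :: "nat \<Rightarrow> nat \<Rightarrow> qstate \<Rightarrow> qstate \<Rightarrow> complex" where
  "state_inner n m u v = (\<Sum>a\<in>basis_idx n m. cnj (u a) * v a)"

lemma finite_basis_idx [simp]: "finite (basis_idx n m)"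
  by (simp add: basis_idx_def)

lemma sum_basis_idx: "(\<Sum>c\<in>basis_idx n m. g c) = (\<Sum>i\<le>n. \<Sum>j<m. g (i, j))"
  by (simp add: basis_idx_def sum.cartesian_product' atLeast0AtMost atLeast0LessThan)

lemma sq_norm_eq_state_inner: "complex_of_real (sq_norm n m v) = state_inner n m v v"
  unfolding sq_norm_def state_inner_def of_real_sum
  by (intro sum.cong refl) (metis complex_norm_square mult.commute)

lemma sq_norm_eq_0_iff: "sq_norm n m v = 0 \<longleftrightarrow> (\<forall>a\<in>basis_idx n m. v a = 0)"
  unfolding sq_norm_def by (subst sum_nonneg_eq_0_iff) auto

lemma state_inner_cong:
  "\<forall>a\<in>basis_idx n m. u a = u' a \<Longrightarrow> \<forall>a\<in>basis_idx n m. v a = v' a \<Longrightarrow>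
   state_inner n m u v = state_inner n m u' v'"
  by (auto simp: state_inner_def intro!: sum.cong)

lemma state_inner_zero_right:
  "\<forall>a\<in>basis_idx n m. v a = 0 \<Longrightarrow> state_inner n m u v = 0"
  by (simp add: state_inner_def)

lemma state_inner_zero_left:
  "\<forall>a\<in>basis_idx n m. u a = 0 \<Longrightarrow> state_inner n m u v = 0"
  by (simp add: state_inner_def)

lemma state_inner_diff_left:
  "state_inner n m (\<lambda>a. u a - u' a) v = state_inner n m u v - state_inner n m u' v"
  by (simp add: state_inner_def left_diff_distrib sum_subtractf)

lemma state_inner_diff_right:
  "state_inner n m u (\<lambda>a. v a - v' a) = state_inner n m u v - state_inner n m u v'"
  by (simp add: state_inner_def right_diff_distrib sum_subtractf)

lemma apply_op_cong:
  "\<forall>a\<in>basis_idx n m. v a = v' a \<Longrightarrow> apply_op n m U v = apply_op n m U v'"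
  by (auto simp: apply_op_def intro!: ext sum.cong)

lemma apply_op_diff:
  "apply_op n m U (\<lambda>a. u a - v a) c = apply_op n m U u c - apply_op n m U v c"
  by (simp add: apply_op_def right_diff_distrib sum_subtractf)

lemma apply_op_id_op:
  assumes "a \<in> basis_idx n m"
  shows "apply_op n m id_op v a = v a"
proof -
  have "apply_op n m id_op v a = (\<Sum>b\<in>basis_idx n m. if a = b then v b else 0)"
    unfolding apply_op_def id_op_def by (intro sum.cong refl) auto
  then show ?thesis
    using assms by (simp add: sum.delta)
qed

lemma is_unitary_id_op: "is_unitary n m id_op"
  unfolding is_unitary_def
proof (intro ballI)
  fix a b assume a: "a \<in> basis_idx n m"
  have "(\<Sum>c\<in>basis_idx n m. cnj (id_op c a) * id_op c b)
      = (\<Sum>c\<in>basis_idx n m. if c = a then (if a = b then 1 else 0) else 0)"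
    by (intro sum.cong refl) (auto simp: id_op_def)
  then show "(\<Sum>c\<in>basis_idx n m. cnj (id_op c a) * id_op c b) = (if a = b then 1 else 0)"
    using a by (simp add: sum.delta')
qed

lemma state_inner_hermitian:
  assumes "\<forall>a\<in>basis_idx n m. \<forall>b\<in>basis_idx n m. H a b = cnj (H b a)"
  shows "state_inner n m (apply_op n m H u) v = state_inner n m u (apply_op n m H v)"
proof -
  let ?B = "basis_idx n m"
  have "state_inner n m (apply_op n m H u) v = (\<Sum>a\<in>?B. \<Sum>b\<in>?B. cnj (H a b) * cnj (u b) * v a)"
    by (simp add: state_inner_def apply_op_def sum_distrib_right)
  also have "\<dots> = (\<Sum>b\<in>?B. \<Sum>a\<in>?B. cnj (H a b) * cnj (u b) * v a)"
    by (rule sum.swap)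
  also have "\<dots> = (\<Sum>b\<in>?B. cnj (u b) * (\<Sum>a\<in>?B. H b a * v a))"
  proof -
    have "cnj (H a b) = H b a" if "a \<in> ?B" "b \<in> ?B" for a b
      using assms that by (metis complex_cnj_cnj)
    then show ?thesis
      by (auto simp: sum_distrib_left mult_ac intro!: sum.cong)
  qed
  finally show ?thesis
    by (simp add: state_inner_def apply_op_def)
qed

lemma state_inner_unitary:
  assumes "is_unitary n m U"
  shows "state_inner n m (apply_op n m U u) (apply_op n m U v) = state_inner n m u v"
proof -
  let ?B = "basis_idx n m"
  have "state_inner n m (apply_op n m U u) (apply_op n m U v)
      = (\<Sum>c\<in>?B. \<Sum>b\<in>?B. \<Sum>d\<in>?B. cnj (U c b) * U c d * (cnj (u b) * v d))"
    by (simp add: state_inner_def apply_op_def sum_distrib_right sum_distrib_left mult_ac)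
  also have "\<dots> = (\<Sum>b\<in>?B. \<Sum>d\<in>?B. (\<Sum>c\<in>?B. cnj (U c b) * U c d) * (cnj (u b) * v d))"
  proof -
    have "(\<Sum>c\<in>?B. \<Sum>b\<in>?B. \<Sum>d\<in>?B. cnj (U c b) * U c d * (cnj (u b) * v d))
        = (\<Sum>b\<in>?B. \<Sum>c\<in>?B. \<Sum>d\<in>?B. cnj (U c b) * U c d * (cnj (u b) * v d))"
      by (rule sum.swap)
    also have "\<dots> = (\<Sum>b\<in>?B. \<Sum>d\<in>?B. \<Sum>c\<in>?B. cnj (U c b) * U c d * (cnj (u b) * v d))"
      by (rule sum.cong[OF refl], rule sum.swap)
    finally show ?thesis
      by (simp only: sum_distrib_right)
  qed
  also have "\<dots> = (\<Sum>b\<in>?B. \<Sum>d\<in>?B. if b = d then cnj (u b) * v d else 0)"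
  proof (intro sum.cong refl)
    fix b d assume "b \<in> ?B" "d \<in> ?B"
    then have "(\<Sum>c\<in>?B. cnj (U c b) * U c d) = (if b = d then 1 else 0)"
      using assms unfolding is_unitary_def by blast
    then show "(\<Sum>c\<in>?B. cnj (U c b) * U c d) * (cnj (u b) * v d) = (if b = d then cnj (u b) * v d else 0)"
      by simp
  qed
  also have "\<dots> = state_inner n m u v"
    by (simp add: state_inner_def sum.delta)
  finally show ?thesis .
qed

lemma sq_norm_unitary:
  assumes "is_unitary n m U"
  shows "sq_norm n m (apply_op n m U v) = sq_norm n m v"
proof -
  have "complex_of_real (sq_norm n m (apply_op n m U v)) = complex_of_real (sq_norm n m v)"
    by (simp only: sq_norm_eq_state_inner state_inner_unitary[OF assms])
  then show ?thesis
    by (simp only: of_real_eq_iff)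
qed

lemma projection_hermitian:
  "is_projection n m P \<Longrightarrow> \<forall>a\<in>basis_idx n m. \<forall>b\<in>basis_idx n m. P a b = cnj (P b a)"
  unfolding is_projection_def by blast

lemma apply_op_projection_idem:
  assumes "is_projection n m P" and "a \<in> basis_idx n m"
  shows "apply_op n m P (apply_op n m P v) a = apply_op n m P v a"
proof -
  let ?B = "basis_idx n m"
  have "apply_op n m P (apply_op n m P v) a = (\<Sum>b\<in>?B. \<Sum>c\<in>?B. P a b * P b c * v c)"
    by (simp add: apply_op_def sum_distrib_left mult_ac)
  also have "\<dots> = (\<Sum>c\<in>?B. \<Sum>b\<in>?B. P a b * P b c * v c)"
    by (rule sum.swap)
  also have "\<dots> = (\<Sum>c\<in>?B. (\<Sum>b\<in>?B. P a b * P b c) * v c)"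
    by (simp add: sum_distrib_right)
  also have "\<dots> = (\<Sum>c\<in>?B. P a c * v c)"
  proof -
    have "\<forall>a\<in>?B. \<forall>c\<in>?B. (\<Sum>b\<in>?B. P a b * P b c) = P a c"
      using assms(1) unfolding is_projection_def by blast
    then show ?thesis
      using assms(2) by (intro sum.cong refl) simp
  qed
  finally show ?thesis
    by (simp add: apply_op_def)
qed

lemma apply_op_meas_proj_False:
  "c \<in> basis_idx n m \<Longrightarrow> apply_op n m (meas_proj P False) u c = u c - apply_op n m P u c"
  using apply_op_id_op[of c n m u]
  by (simp add: meas_proj_def apply_op_def left_diff_distrib sum_subtractf)

lemma outcome_prob_False:
  assumes "is_projection n m P"
  shows "outcome_prob n m P u False = sq_norm n m u - outcome_prob n m P u True"
proof -
  let ?w = "apply_op n m P u"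
  have herm: "state_inner n m ?w v = state_inner n m u (apply_op n m P v)" for v
    using state_inner_hermitian[OF projection_hermitian[OF assms]] .
  have ww: "state_inner n m ?w ?w = state_inner n m u ?w"
    unfolding herm using apply_op_projection_idem[OF assms] by (intro state_inner_cong) auto
  have "complex_of_real (outcome_prob n m P u False) = state_inner n m (\<lambda>c. u c - ?w c) (\<lambda>c. u c - ?w c)"
    unfolding outcome_prob_def sq_norm_eq_state_inner
    by (intro state_inner_cong) (simp_all add: apply_op_meas_proj_False)
  also have "\<dots> = state_inner n m u u - state_inner n m ?w ?w"
    by (simp add: state_inner_diff_left state_inner_diff_right ww herm[of u])
  also have "\<dots> = complex_of_real (sq_norm n m u - outcome_prob n m P u True)"
    by (simp add: outcome_prob_def meas_proj_def sq_norm_eq_state_inner)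
  finally show ?thesis
    by (simp only: of_real_eq_iff)
qed

lemma outcome_prob_cong:
  "\<forall>a\<in>basis_idx n m. u a = u' a \<Longrightarrow> outcome_prob n m P u b = outcome_prob n m P u' b"
  by (simp add: outcome_prob_def apply_op_cong[of n m u u'])

lemma outcome_True_eq_1_iff:
  assumes "is_projection n m P" "sq_norm n m u = 1"
  shows "outcome_prob n m P u True = 1 \<longleftrightarrow> (\<forall>c\<in>basis_idx n m. apply_op n m P u c = u c)"
proof -
  have "outcome_prob n m P u True = 1 \<longleftrightarrow> outcome_prob n m P u False = 0"
    using outcome_prob_False[OF assms(1), of u] assms(2) by auto
  also have "\<dots> \<longleftrightarrow> (\<forall>c\<in>basis_idx n m. apply_op n m P u c = u c)"
    by (auto simp: outcome_prob_def sq_norm_eq_0_iff apply_op_meas_proj_False)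
  finally show ?thesis .
qed

lemma outcome_False_eq_1_iff:
  assumes "is_projection n m P" "sq_norm n m u = 1"
  shows "outcome_prob n m P u False = 1 \<longleftrightarrow> (\<forall>c\<in>basis_idx n m. apply_op n m P u c = 0)"
proof -
  have "outcome_prob n m P u False = 1 \<longleftrightarrow> outcome_prob n m P u True = 0"
    using outcome_prob_False[OF assms(1), of u] assms(2) by auto
  also have "\<dots> \<longleftrightarrow> (\<forall>c\<in>basis_idx n m. apply_op n m P u c = 0)"
    by (simp add: outcome_prob_def meas_proj_def sq_norm_eq_0_iff)
  finally show ?thesis .
qed

lemma state_inner_kernel_range:
  assumes "is_projection n m P"
    and "\<forall>c\<in>basis_idx n m. apply_op n m P u c = 0"
    and "\<forall>c\<in>basis_idx n m. apply_op n m P v c = v c"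
  shows "state_inner n m u v = 0"
proof -
  have "state_inner n m u v = state_inner n m u (apply_op n m P v)"
    using assms(3) by (intro state_inner_cong) auto
  also have "\<dots> = state_inner n m (apply_op n m P u) v"
    by (rule state_inner_hermitian[OF projection_hermitian[OF assms(1)], symmetric])
  also have "\<dots> = 0"
    using assms(2) by (rule state_inner_zero_left)
  finally show ?thesis .
qed

section \<open>One query and the weights \<beta>\<close>

definition query_sign :: "bool list \<Rightarrow> nat \<Rightarrow> real" where
  "query_sign x i = (if 1 \<le> i \<and> x ! (i - 1) then -1 else 1)"

definition separating_weights ::
    "nat \<Rightarrow> bool list set \<Rightarrow> (bool list \<Rightarrow> bool) \<Rightarrow> (nat \<Rightarrow> real) \<Rightarrow> bool" where
  "separating_weights n D f \<beta> \<longleftrightarrow> (\<forall>i\<le>n. \<beta> i \<ge> 0) \<and> (\<Sum>i\<le>n. \<beta> i) = 1 \<and>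
     (\<forall>x\<in>D. \<forall>y\<in>D. \<not> f x \<longrightarrow> f y \<longrightarrow> \<beta> 0 + (\<Sum>i=1..n. \<beta> i * xor_sign x y i) = 0)"

lemma query_op_eq: "query_op x v (i, j) = complex_of_real (query_sign x i) * v (i, j)"
  by (simp add: query_op_def query_sign_def)

lemma sq_norm_query_op: "sq_norm n m (query_op x v) = sq_norm n m v"
proof -
  have "cmod (complex_of_real (query_sign x i) * z) = cmod z" for i z
    by (simp add: norm_mult query_sign_def)
  then show ?thesis
    by (simp add: sq_norm_def sum_basis_idx query_op_eq)
qed

lemma state_inner_query_op:
  "state_inner n m (query_op x v) (query_op y v)
     = complex_of_real (\<Sum>i\<le>n. query_sign x i * query_sign y i * (\<Sum>j<m. (cmod (v (i, j)))\<^sup>2))"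
proof -
  have summand: "cnj (complex_of_real s * z) * (complex_of_real t * z) = complex_of_real (s * t * (cmod z)\<^sup>2)"
    for s t :: real and z
    unfolding of_real_mult complex_norm_square by (simp add: mult_ac)
  have "state_inner n m (query_op x v) (query_op y v)
      = complex_of_real (\<Sum>i\<le>n. \<Sum>j<m. query_sign x i * query_sign y i * (cmod (v (i, j)))\<^sup>2)"
    by (simp only: state_inner_def sum_basis_idx query_op_eq summand of_real_sum)
  then show ?thesis
    by (simp add: sum_distrib_left)
qed

lemma sum_query_sign_xor:
  "(\<Sum>i\<le>n. query_sign x i * query_sign y i * \<beta> i) = \<beta> 0 + (\<Sum>i=1..n. \<beta> i * xor_sign x y i)"
proof -
  have "{..n} = insert 0 {1..n}"
    by auto
  moreover have "query_sign x i * query_sign y i = xor_sign x y i" if "1 \<le> i" for i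
    using that by (auto simp: query_sign_def xor_sign_def)
  ultimately show ?thesis
    by (simp add: query_sign_def mult.commute)
qed

lemma exact_1query_imp_separating_weights:
  assumes "exact_1query n D f"
  obtains \<beta> where "separating_weights n D f \<beta>"
proof -
  obtain m \<psi>0 U0 U1 P where norm_\<psi>0: "sq_norm n m \<psi>0 = 1"
    and U0: "is_unitary n m U0" and U1: "is_unitary n m U1" and P: "is_projection n m P"
    and exact: "\<forall>x\<in>D. outcome_prob n m P (final_state n m \<psi>0 U0 U1 x) (f x) = 1"
    using assms unfolding exact_1query_def by blast
  define \<phi> where "\<phi> = apply_op n m U0 \<psi>0"
  define \<beta> where "\<beta> i = (\<Sum>j<m. (cmod (\<phi> (i, j)))\<^sup>2)" for i
  have final: "final_state n m \<psi>0 U0 U1 x = apply_op n m U1 (query_op x \<phi>)" for x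
    by (simp add: final_state_def \<phi>_def)
  have norm_\<phi>: "sq_norm n m \<phi> = 1"
    using sq_norm_unitary[OF U0] norm_\<psi>0 by (simp add: \<phi>_def)
  have norm_final: "sq_norm n m (final_state n m \<psi>0 U0 U1 x) = 1" for x
    using norm_\<phi> by (simp add: final sq_norm_unitary[OF U1] sq_norm_query_op)
  have inner_final: "state_inner n m (final_state n m \<psi>0 U0 U1 x) (final_state n m \<psi>0 U0 U1 y)
      = complex_of_real (\<beta> 0 + (\<Sum>i=1..n. \<beta> i * xor_sign x y i))" for x y
    by (simp add: final state_inner_unitary[OF U1] state_inner_query_op sum_query_sign_xor \<beta>_def)
  have "\<beta> 0 + (\<Sum>i=1..n. \<beta> i * xor_sign x y i) = 0"
    if "x \<in> D" "y \<in> D" "\<not> f x" "f y" for x y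
  proof -
    have x_rejected: "outcome_prob n m P (final_state n m \<psi>0 U0 U1 x) False = 1"
      using exact that(1,3) by force
    have y_accepted: "outcome_prob n m P (final_state n m \<psi>0 U0 U1 y) True = 1"
      using exact that(2,4) by force
    have "state_inner n m (final_state n m \<psi>0 U0 U1 x) (final_state n m \<psi>0 U0 U1 y) = 0"
      using x_rejected y_accepted
      by (intro state_inner_kernel_range[OF P])
        (simp_all add: outcome_False_eq_1_iff[OF P norm_final] outcome_True_eq_1_iff[OF P norm_final])
    then show ?thesis
      by (simp only: inner_final of_real_eq_0_iff)
  qed
  moreover have "(\<Sum>i\<le>n. \<beta> i) = 1"
    using norm_\<phi> by (simp add: \<beta>_def sq_norm_def sum_basis_idx)
  ultimately have "separating_weights n D f \<beta>"
    by (simp add: separating_weights_def \<beta>_def sum_nonneg)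
  then show thesis ..
qed

section \<open>Projection onto the span of finitely many states\<close>

definition projects_onto :: "nat \<Rightarrow> nat \<Rightarrow> qop \<Rightarrow> qstate set \<Rightarrow> bool" where
  "projects_onto n m P V \<longleftrightarrow> is_projection n m P \<and>
     (\<forall>v\<in>V. \<forall>a\<in>basis_idx n m. apply_op n m P v a = v a) \<and>
     (\<forall>w. (\<forall>v\<in>V. state_inner n m v w = 0) \<longrightarrow> (\<forall>a\<in>basis_idx n m. apply_op n m P w a = 0))"

lemma projects_onto_empty: "projects_onto n m (\<lambda>a b. 0) {}"
  by (simp add: projects_onto_def is_projection_def apply_op_def)

lemma apply_op_add_rank_one:
  "apply_op n m (\<lambda>a b. P a b + r a * cnj (r b) / c) w a
     = apply_op n m P w a + r a * state_inner n m r w / c"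
proof -
  have "(P a b + r a * cnj (r b) / c) * w b = P a b * w b + r a / c * (cnj (r b) * w b)" for b
    by (simp add: divide_inverse algebra_simps)
  then show ?thesis
    by (simp add: apply_op_def state_inner_def sum.distrib sum_distrib_left sum_divide_distrib)
qed

lemma is_projection_add_rank_one:
  assumes P: "is_projection n m P" and Pr: "\<forall>a\<in>basis_idx n m. apply_op n m P r a = 0"
    and N: "sq_norm n m r \<noteq> 0"
  shows "is_projection n m (\<lambda>a b. P a b + r a * cnj (r b) / complex_of_real (sq_norm n m r))"
proof -
  let ?B = "basis_idx n m" and ?N = "complex_of_real (sq_norm n m r)"
  have herm: "cnj (P a b) = P b a" if "a \<in> ?B" "b \<in> ?B" for a b
    using projection_hermitian[OF P] that by metis
  have idem: "\<forall>a\<in>?B. \<forall>b\<in>?B. (\<Sum>c\<in>?B. P a c * P c b) = P a b"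
    using P unfolding is_projection_def by blast
  have right: "(\<Sum>c\<in>?B. P a c * r c) = 0" if "a \<in> ?B" for a
    using Pr that by (simp add: apply_op_def)
  have left: "(\<Sum>c\<in>?B. cnj (r c) * P c b) = 0" if "b \<in> ?B" for b
  proof -
    have "(\<Sum>c\<in>?B. cnj (r c) * P c b) = cnj (\<Sum>c\<in>?B. P b c * r c)"
      using that by (auto simp: herm mult.commute intro!: sum.cong)
    then show ?thesis
      using right[OF that] by simp
  qed
  have rr: "(\<Sum>c\<in>?B. cnj (r c) * r c) = ?N"
    by (simp add: sq_norm_eq_state_inner state_inner_def)
  have "(\<Sum>c\<in>?B. (P a c + r a * cnj (r c) / ?N) * (P c b + r c * cnj (r b) / ?N))
      = P a b + r a * cnj (r b) / ?N" if "a \<in> ?B" "b \<in> ?B" for a b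
  proof -
    have "(P a c + r a * cnj (r c) / ?N) * (P c b + r c * cnj (r b) / ?N)
        = P a c * P c b + cnj (r b) / ?N * (P a c * r c) + r a / ?N * (cnj (r c) * P c b)
          + r a * cnj (r b) / ?N\<^sup>2 * (cnj (r c) * r c)" for c
      by (simp add: divide_inverse algebra_simps power2_eq_square)
    then have "(\<Sum>c\<in>?B. (P a c + r a * cnj (r c) / ?N) * (P c b + r c * cnj (r b) / ?N))
        = (\<Sum>c\<in>?B. P a c * P c b) + cnj (r b) / ?N * (\<Sum>c\<in>?B. P a c * r c)
          + r a / ?N * (\<Sum>c\<in>?B. cnj (r c) * P c b)
          + r a * cnj (r b) / ?N\<^sup>2 * (\<Sum>c\<in>?B. cnj (r c) * r c)"
      by (simp only: sum.distrib flip: sum_distrib_left)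
    then show ?thesis
      using idem that N by (simp add: right left rr power2_eq_square)
  qed
  moreover have "P a b + r a * cnj (r b) / ?N = cnj (P b a + r b * cnj (r a) / ?N)"
    if "a \<in> ?B" "b \<in> ?B" for a b
    using that by (simp add: herm mult.commute)
  ultimately show ?thesis
    unfolding is_projection_def by blast
qed

lemma projects_onto_insert_residual:
  assumes PV: "projects_onto n m P V" and r: "r = (\<lambda>a. v a - apply_op n m P v a)"
    and N: "sq_norm n m r \<noteq> 0"
  shows "projects_onto n m (\<lambda>a b. P a b + r a * cnj (r b) / complex_of_real (sq_norm n m r))
           (insert v V)"
    (is "projects_onto n m ?P' _")
proof -
  let ?B = "basis_idx n m" and ?N = "sq_norm n m r"
  have P: "is_projection n m P"
    and fixed: "\<forall>u\<in>V. \<forall>a\<in>?B. apply_op n m P u a = u a"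
    and killed: "\<And>w. \<forall>u\<in>V. state_inner n m u w = 0 \<Longrightarrow> \<forall>a\<in>?B. apply_op n m P w a = 0"
    using PV by (auto simp: projects_onto_def)
  have Pr: "\<forall>a\<in>?B. apply_op n m P r a = 0"
    using apply_op_projection_idem[OF P] by (simp add: r apply_op_diff)
  have inner_r: "state_inner n m r w = state_inner n m v w - state_inner n m v (apply_op n m P w)" for w
    by (simp add: r state_inner_diff_left state_inner_hermitian[OF projection_hermitian[OF P]])
  have apply_P': "apply_op n m ?P' w a = apply_op n m P w a + r a * state_inner n m r w / ?N" for w a
    by (rule apply_op_add_rank_one)
  have "state_inner n m r (apply_op n m P v) = 0"
    by (simp add: state_inner_hermitian[OF projection_hermitian[OF P], symmetric]
        state_inner_zero_left Pr)
  then have "state_inner n m r v = ?N"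
    by (simp add: sq_norm_eq_state_inner state_inner_diff_right r)
  then have "\<forall>a\<in>?B. apply_op n m ?P' v a = v a"
    using N unfolding apply_P' by (simp add: r)
  moreover have "\<forall>u\<in>V. \<forall>a\<in>?B. apply_op n m ?P' u a = u a"
  proof (intro ballI)
    fix u a assume "u \<in> V" "a \<in> ?B"
    moreover have "state_inner n m v (apply_op n m P u) = state_inner n m v u"
      using fixed \<open>u \<in> V\<close> by (intro state_inner_cong) auto
    ultimately show "apply_op n m ?P' u a = u a"
      using fixed by (simp add: apply_P' inner_r)
  qed
  moreover have "\<forall>a\<in>?B. apply_op n m ?P' w a = 0"
    if "\<forall>u\<in>insert v V. state_inner n m u w = 0" for w
  proof -
    have "\<forall>a\<in>?B. apply_op n m P w a = 0"
      using that killed by simp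
    then show ?thesis
      using that by (simp add: apply_P' inner_r state_inner_zero_right)
  qed
  ultimately show ?thesis
    using is_projection_add_rank_one[OF P Pr N] by (simp add: projects_onto_def)
qed

lemma projects_onto_insert:
  assumes "projects_onto n m P V"
  obtains P' where "projects_onto n m P' (insert v V)"
proof (cases "sq_norm n m (\<lambda>a. v a - apply_op n m P v a) = 0")
  case True
  then have "\<forall>a\<in>basis_idx n m. apply_op n m P v a = v a"
    by (simp add: sq_norm_eq_0_iff)
  with assms show thesis
    by (intro that[of P]) (auto simp: projects_onto_def)
next
  case False
  with assms show thesis
    by (intro that) (rule projects_onto_insert_residual[OF _ refl])
qed

lemma projects_onto_exists:
  assumes "finite V"
  obtains P where "projects_onto n m P V"
  using assms
proof (induction V arbitrary: thesis)
  case empty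
  then show ?case
    using projects_onto_empty by blast
next
  case (insert v V)
  then show ?case
    by (meson projects_onto_insert)
qed

section \<open>An algorithm from separating weights\<close>

lemma finite_lists_of_length: "D \<subseteq> {x :: bool list. length x = n} \<Longrightarrow> finite D"
  using finite_lists_length_eq[of "UNIV :: bool set" n] by (auto intro: finite_subset)

lemma xor_sign_commute: "xor_sign x y i = xor_sign y x i"
  by (auto simp: xor_sign_def)

lemma final_state_id_op:
  "c \<in> basis_idx n m \<Longrightarrow> final_state n m \<psi> id_op id_op x c = query_op x \<psi> c"
  by (cases c) (simp add: final_state_def apply_op_id_op query_op_eq)

lemma separating_weights_imp_exact_1query:
  assumes D: "D \<subseteq> {x. length x = n}" and \<beta>: "separating_weights n D f \<beta>"
  shows "exact_1query n D f"
proof -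
  have nonneg: "\<forall>i\<le>n. 0 \<le> \<beta> i" and total: "(\<Sum>i\<le>n. \<beta> i) = 1"
    and orth: "\<forall>x\<in>D. \<forall>y\<in>D. \<not> f x \<longrightarrow> f y \<longrightarrow> \<beta> 0 + (\<Sum>i=1..n. \<beta> i * xor_sign x y i) = 0"
    using \<beta> unfolding separating_weights_def by blast+
  define \<psi>0 :: qstate where "\<psi>0 c = complex_of_real (sqrt (\<beta> (fst c)))" for c
  have weight: "(\<Sum>j<1. (cmod (\<psi>0 (i, j)))\<^sup>2) = \<beta> i" if "i \<le> n" for i
    using nonneg that by (simp add: \<psi>0_def)
  have norm_\<psi>0: "sq_norm n 1 \<psi>0 = 1"
    using total weight by (simp add: sq_norm_def sum_basis_idx)
  have norm_query: "sq_norm n 1 (query_op x \<psi>0) = 1" for x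
    using norm_\<psi>0 by (simp add: sq_norm_query_op)
  have inner_query: "state_inner n 1 (query_op y \<psi>0) (query_op x \<psi>0)
      = complex_of_real (\<beta> 0 + (\<Sum>i=1..n. \<beta> i * xor_sign x y i))" for x y
    using weight by (simp add: state_inner_query_op sum_query_sign_xor xor_sign_commute)
  define V where "V = (\<lambda>y. query_op y \<psi>0) ` {y\<in>D. f y}"
  have "finite V"
    using finite_lists_of_length[OF D] by (simp add: V_def)
  then obtain P where P: "projects_onto n 1 P V"
    by (rule projects_onto_exists)
  then have proj: "is_projection n 1 P"
    by (simp add: projects_onto_def)
  have "outcome_prob n 1 P (query_op x \<psi>0) (f x) = 1" if "x \<in> D" for x
  proof (cases "f x")
    case True
    then have "query_op x \<psi>0 \<in> V"
      using that by (simp add: V_def)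
    then have "\<forall>c\<in>basis_idx n 1. apply_op n 1 P (query_op x \<psi>0) c = query_op x \<psi>0 c"
      using P unfolding projects_onto_def by blast
    then show ?thesis
      using True outcome_True_eq_1_iff[OF proj norm_query] by simp
  next
    case False
    have "state_inner n 1 v (query_op x \<psi>0) = 0" if "v \<in> V" for v
    proof -
      obtain y where y: "y \<in> D" "f y" and v: "v = query_op y \<psi>0"
        using \<open>v \<in> V\<close> by (auto simp: V_def)
      show ?thesis
        unfolding v inner_query using orth y \<open>x \<in> D\<close> False by simp
    qed
    then have "\<forall>c\<in>basis_idx n 1. apply_op n 1 P (query_op x \<psi>0) c = 0"
      using P unfolding projects_onto_def by blast
    then show ?thesis
      using False outcome_False_eq_1_iff[OF proj norm_query] by simp
  qed
  moreover have "outcome_prob n 1 P (final_state n 1 \<psi>0 id_op id_op x) b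
      = outcome_prob n 1 P (query_op x \<psi>0) b" for x b
    by (rule outcome_prob_cong) (simp add: final_state_id_op)
  ultimately have "\<forall>x\<in>D. outcome_prob n 1 P (final_state n 1 \<psi>0 id_op id_op x) (f x) = 1"
    by simp
  with norm_\<psi>0 is_unitary_id_op proj show ?thesis
    unfolding exact_1query_def by (intro exI[of _ 1]) blast
qed

theorem theorem1:
  fixes n :: nat and D :: "bool list set" and f :: "bool list \<Rightarrow> bool"
  assumes "D \<subseteq> {x. length x = n}"
    and "\<exists>x\<in>D. \<exists>y\<in>D. f x \<noteq> f y"
  shows "exact_1query n D f \<longleftrightarrow>
    (\<exists>\<beta> :: nat \<Rightarrow> real. (\<forall>i\<le>n. \<beta> i \<ge> 0) \<and> (\<Sum>i\<le>n. \<beta> i) = 1 \<and>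
       (\<forall>x\<in>D. \<forall>y\<in>D. \<not> f x \<longrightarrow> f y \<longrightarrow>
          \<beta> 0 + (\<Sum>i=1..n. \<beta> i * xor_sign x y i) = 0))"
  unfolding separating_weights_def[symmetric]
  by (metis exact_1query_imp_separating_weights separating_weights_imp_exact_1query[OF assms(1)])

end
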